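(* Let $d\in\mathbb{N}$ and let $\mathcal{P}$ be a partition of $\mathbb{R}^{d}$. Suppose there exists $M\in(0,\infty)$ such that every $X\in\mathcal{P}$ is Lebesgue measurable with $m(X)<M$. Then for any $\epsilon\in(0,\infty)$ there exists $\vec{p}\in\mathbb{R}^{d}$ such that $|\mathcal{N}_{\epsilon}(\vec{p})|\geq d+1$.
   Context: $m$ denotes Lebesgue measure on $\mathbb{R}^d$. On $\mathbb{R}^d$ use $d_{max}(\vec{x},\vec{y})=\max_i|x_i-y_i|$ and the closed ball $\overline{B}_{\epsilon}(\vec{p})=\{\vec{x}: d_{max}(\vec{x},\vec{p})\le\epsilon\}$. For a partition $\mathcal{P}$, $\mathcal{N}_{\epsilon}(\vec{p})=\{X\in\mathcal{P}: X\cap\overline{B}_{\epsilon}(\vec{p})\neq\emptyset\}$. *)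

theory Defs
  imports "HOL-Analysis.Analysis"
begin

text \<open>Points of R^d are vectors real^'n with d = CARD('n).\<close>

definition dmax :: "real^'n \<Rightarrow> real^'n \<Rightarrow> real" where
  "dmax x y = Max (range (\<lambda>i. \<bar>x $ i - y $ i\<bar>))"

definition maxball :: "real \<Rightarrow> real^'n \<Rightarrow> (real^'n) set" where
  "maxball \<epsilon> p = {x. dmax x p \<le> \<epsilon>}"

definition is_partition :: "'a set set \<Rightarrow> bool" where
  "is_partition P \<longleftrightarrow> (\<forall>X\<in>P. X \<noteq> {}) \<and> \<Union>P = UNIV \<and>
     (\<forall>X\<in>P. \<forall>Y\<in>P. X \<noteq> Y \<longrightarrow> X \<inter> Y = {})"

definition nbhd :: "(real^'n) set set \<Rightarrow> real \<Rightarrow> real^'n \<Rightarrow> (real^'n) set set" where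
  "nbhd P \<epsilon> p = {X\<in>P. X \<inter> maxball \<epsilon> p \<noteq> {}}"

end

theory Submission
  imports Defs
begin

text \<open>Suppose every closed max-norm ball of radius \<open>\<epsilon>\<close> meets at most \<open>d\<close> pieces, and let
\<open>h = \<epsilon>/2\<close>. Every ball of radius \<open>h\<close> then contains a piece filling at least a \<open>1/d\<close>
fraction of its volume \<open>(2h)^d\<close>; colour each point by such a piece. On the grid \<open>h\<int>\<^sup>d\<close>
link neighbouring points of equal colour. A linked chain cannot climb \<open>3K\<close> levels in any
coordinate direction, for then its colour class would contain \<open>K\<close> disjoint heavy balls and
have measure above \<open>M\<close>. Hence labelling a grid point by the set of upper faces its linked
component reaches is a Sperner labelling of the cube \<open>[0, 3K]\<^sup>d\<close>, and Kuhn's combinatorial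
lemma yields a simplex of \<open>d + 1\<close> mutually adjacent grid points with distinct labels, hence
distinct colours. All these colours meet one ball of radius \<open>2h = \<epsilon>\<close>.\<close>

lemma mem_maxball: "y \<in> maxball e q \<longleftrightarrow> (\<forall>i. \<bar>y $ i - q $ i\<bar> \<le> e)"
  unfolding maxball_def dmax_def by (subst Max_le_iff) auto

lemma maxball_eq_cbox: "maxball e q = cbox (\<chi> i. q $ i - e) (\<chi> i. q $ i + e)"
  by (auto simp: mem_maxball mem_box_cart abs_le_iff algebra_simps)

lemma maxball_lmeasurable [simp]: "maxball e q \<in> lmeasurable"
  by (simp add: maxball_eq_cbox)

lemma measure_maxball:
  assumes "0 \<le> e"
  shows "measure lebesgue (maxball e (q :: real^'n)) = (2 * e) ^ CARD('n)"
proof -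
  have "q \<in> cbox (\<chi> i. q $ i - e) (\<chi> i. q $ i + e)"
    using assms by (simp add: mem_box_cart)
  then have "cbox (\<chi> i. q $ i - e) (\<chi> i. q $ i + e) \<noteq> {}"
    by blast
  then show ?thesis
    by (simp add: maxball_eq_cbox content_cbox_cart)
qed

lemma maxball_subset_maxball:
  assumes "y \<in> maxball e q"
  shows "maxball e' y \<subseteq> maxball (e + e') q"
proof
  fix x assume x: "x \<in> maxball e' y"
  show "x \<in> maxball (e + e') q"
    unfolding mem_maxball
  proof
    fix i
    have "\<bar>y $ i - q $ i\<bar> \<le> e" "\<bar>x $ i - y $ i\<bar> \<le> e'"
      using assms x by (simp_all add: mem_maxball)
    then show "\<bar>x $ i - q $ i\<bar> \<le> e + e'" by arith
  qed
qed

lemma maxball_mono: "e \<le> e' \<Longrightarrow> maxball e q \<subseteq> maxball e' q"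
  unfolding mem_maxball subset_iff by (auto intro: order_trans)

lemma nbhd_mono: "e \<le> e' \<Longrightarrow> nbhd P e q \<subseteq> nbhd P e' q"
  unfolding nbhd_def using maxball_mono by blast

lemma finite_card_nbhd_mono:
  assumes "e \<le> e'" "finite (nbhd P e' q)"
  shows "finite (nbhd P e q)" "card (nbhd P e q) \<le> card (nbhd P e' q)"
  using nbhd_mono[OF assms(1)] assms(2) by (auto intro: card_mono finite_subset)

lemma maxball_disjoint:
  assumes "e + e' < \<bar>p $ i - q $ i\<bar>"
  shows "maxball e p \<inter> maxball e' q = {}"
proof -
  have "\<bar>p $ i - q $ i\<bar> \<le> e + e'" if "x \<in> maxball e p" "x \<in> maxball e' q" for x
  proof -
    have "\<bar>x $ i - p $ i\<bar> \<le> e" "\<bar>x $ i - q $ i\<bar> \<le> e'"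
      using that by (simp_all add: mem_maxball)
    then show ?thesis by arith
  qed
  with assms show ?thesis
    by fastforce
qed

lemma emeasure_less_ennrealD:
  fixes M :: "'a measure"
  assumes "A \<in> sets M" "emeasure M A < ennreal b"
  shows "A \<in> fmeasurable M" "measure M A < b"
proof -
  have finite: "emeasure M A < \<infinity>"
    using order.strict_trans[OF assms(2) ennreal_less_top] by simp
  with assms(1) show "A \<in> fmeasurable M"
    by (rule fmeasurableI)
  have "emeasure M A = ennreal (measure M A)"
    using finite by (intro emeasure_eq_ennreal_measure) simp
  with assms(2) show "measure M A < b"
    by (cases "0 \<le> b") (auto simp: ennreal_less_iff ennreal_neg)
qed

lemma ex_piece_measure_ge_average:
  fixes M :: "'a measure" and N :: "'a set set"
  assumes "finite N" "N \<noteq> {}" "disjoint N" "N \<subseteq> sets M"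
    and "B \<in> fmeasurable M" "B \<subseteq> \<Union>N"
  shows "\<exists>X\<in>N. measure M B / card N \<le> measure M (X \<inter> B)"
proof (rule ccontr)
  assume "\<not> ?thesis"
  then have small: "measure M (X \<inter> B) < measure M B / card N" if "X \<in> N" for X
    using that by auto
  have pieces_fin: "X \<inter> B \<in> fmeasurable M" if "X \<in> N" for X
    using assms(4,5) that by (metis Int_commute fmeasurable_Int_fmeasurable subsetD)
  have "B = (\<Union>X\<in>N. X \<inter> B)"
    using assms(6) by blast
  also have "measure M \<dots> = (\<Sum>X\<in>N. measure M (X \<inter> B))"
  proof (rule measure_finite_Union)
    show "disjoint_family_on (\<lambda>X. X \<inter> B) N"
      using assms(3) unfolding disjoint_family_on_def disjoint_def by blast
  qed (use assms(1) pieces_fin in \<open>force simp: fmeasurable_def\<close>)+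
  also have "\<dots> < (\<Sum>X\<in>N. measure M B / card N)"
    using assms(1,2) small by (rule sum_strict_mono)
  also have "\<dots> = measure M B"
    using assms(1,2) by simp
  finally show False by simp
qed

lemma card_mult_le_measure_of_disjoint_subsets:
  fixes M :: "'a measure" and c :: real
  assumes "X \<in> fmeasurable M" "finite I" "disjoint_family_on A I"
    and "\<And>i. i \<in> I \<Longrightarrow> A i \<in> sets M \<and> A i \<subseteq> X \<and> c \<le> measure M (A i)"
  shows "card I * c \<le> measure M X"
proof -
  have "card I * c = (\<Sum>i\<in>I. c)"
    by simp
  also have "\<dots> \<le> (\<Sum>i\<in>I. measure M (A i))"
    using assms(4) by (meson sum_mono)
  also have "\<dots> = measure M (\<Union>i\<in>I. A i)"
  proof (rule measure_finite_Union[symmetric])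
    fix i assume "i \<in> I"
    then have "A i \<in> fmeasurable M"
      using assms(1,4) fmeasurableI2 by blast
    then show "emeasure M (A i) \<noteq> \<infinity>"
      using fmeasurableD2 by auto
  qed (use assms in auto)
  also have "\<dots> \<le> measure M X"
    using assms by (intro measure_mono_fmeasurable) auto
  finally show ?thesis .
qed

lemma partition_heavy_piece:
  fixes P :: "(real^'n) set set"
  assumes P: "is_partition P" "\<forall>X\<in>P. X \<in> sets lebesgue"
    and N: "finite (nbhd P e q)" "card (nbhd P e q) \<le> k" and "0 \<le> e"
  shows "\<exists>X\<in>P. (2 * e) ^ CARD('n) / k \<le> measure lebesgue (X \<inter> maxball e q)"
proof -
  let ?N = "nbhd P e q" and ?B = "maxball e q"
  have cover: "?B \<subseteq> \<Union>?N"
  proof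
    fix x assume "x \<in> ?B"
    moreover obtain X where "X \<in> P" "x \<in> X"
      using P(1) unfolding is_partition_def by blast
    ultimately show "x \<in> \<Union>?N"
      unfolding nbhd_def by blast
  qed
  moreover have "q \<in> ?B"
    using \<open>0 \<le> e\<close> by (simp add: mem_maxball)
  ultimately have nonempty: "?N \<noteq> {}"
    by blast
  have "disjoint ?N"
    using P(1) unfolding is_partition_def nbhd_def disjoint_def by blast
  moreover have "?N \<subseteq> sets lebesgue"
    using P(2) unfolding nbhd_def by blast
  ultimately obtain X where X: "X \<in> ?N" "measure lebesgue ?B / card ?N \<le> measure lebesgue (X \<inter> ?B)"
    using ex_piece_measure_ge_average[OF N(1) nonempty _ _ maxball_lmeasurable cover] by blast
  have "0 < card ?N"
    using N(1) nonempty by (simp add: card_gt_0_iff)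
  with N(2) have "real (card ?N) \<le> k" "0 < real k * card ?N"
    by simp_all
  then have "(2 * e) ^ CARD('n) / k \<le> measure lebesgue ?B / card ?N"
    unfolding measure_maxball[OF \<open>0 \<le> e\<close>] using \<open>0 \<le> e\<close> by (intro divide_left_mono) simp_all
  moreover have "X \<in> P"
    using X(1) unfolding nbhd_def by blast
  ultimately show ?thesis
    using X(2) by (meson order_trans)
qed

lemma partition_heavy_colouring:
  fixes P :: "(real^'n) set set"
  assumes "is_partition P" "\<forall>X\<in>P. X \<in> sets lebesgue"
    and "\<And>q. finite (nbhd P e q)" "\<And>q. card (nbhd P e q) \<le> k" "0 \<le> e"
  obtains col where "\<And>q. col q \<in> P"
    "\<And>q. (2 * e) ^ CARD('n) / k \<le> measure lebesgue (col q \<inter> maxball e q)"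
proof -
  have "\<forall>q. \<exists>X. X \<in> P \<and> (2 * e) ^ CARD('n) / k \<le> measure lebesgue (X \<inter> maxball e q)"
    using partition_heavy_piece[OF assms(1,2) assms(3,4) assms(5)] by blast
  then obtain col where "\<forall>q. col q \<in> P \<and> (2 * e) ^ CARD('n) / k \<le> measure lebesgue (col q \<inter> maxball e q)"
    by (rule choice[THEN exE])
  with that show thesis
    by blast
qed

lemma rtrancl_hits_intermediate_value:
  assumes "(x, y) \<in> R\<^sup>*" "\<And>a b. (a, b) \<in> R \<Longrightarrow> f b \<le> Suc (f a)" "f x \<le> t" "t \<le> f y"
  shows "\<exists>z. (x, z) \<in> R\<^sup>* \<and> f z = (t :: nat)"
  using assms(1,4)
proof (induction rule: rtrancl_induct)
  case base
  then show ?case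
    using assms(3) by auto
next
  case (step y w)
  show ?case
  proof (cases "t \<le> f y")
    case True
    then show ?thesis using step.IH by simp
  next
    case False
    with assms(2)[OF step.hyps(2)] step.prems have "f w = t"
      by linarith
    with rtrancl_into_rtrancl[OF step.hyps] show ?thesis
      by blast
  qed
qed

definition colour_link :: "nat \<Rightarrow> ((nat \<Rightarrow> nat) \<Rightarrow> 'c) \<Rightarrow> ((nat \<Rightarrow> nat) \<times> (nat \<Rightarrow> nat)) set" where
  "colour_link n col = {(a, b). (\<forall>j<n. a j \<le> Suc (b j) \<and> b j \<le> Suc (a j)) \<and> col a = col b}"

lemma colour_link_rtrancl_colour: "(a, b) \<in> (colour_link n col)\<^sup>* \<Longrightarrow> col b = col a"
  by (induction rule: rtrancl_induct) (auto simp: colour_link_def)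

lemma ksimplex_vertices_adjacent:
  assumes "ksimplex p n s" "a \<in> s" "b \<in> s"
  shows "a j \<le> Suc (b j)"
proof -
  from assms(1) obtain base upd where "kuhn_simplex p n base upd s"
    by (auto elim: ksimplex.cases)
  then interpret kuhn_simplex p n base upd s .
  show ?thesis
    using le_Suc_base[OF assms(2), of j] base_le[OF assms(3), of j] by linarith
qed

lemma ksimplex_rainbow:
  fixes col :: "(nat \<Rightarrow> nat) \<Rightarrow> 'c"
  assumes "0 < p"
    and no_crossing: "\<And>x y j. (x, y) \<in> (colour_link n col)\<^sup>* \<Longrightarrow> j < n \<Longrightarrow> x j = 0 \<Longrightarrow> y j \<noteq> p"
  shows "\<exists>s. ksimplex p n s \<and> inj_on col s"
proof -
  let ?R = "colour_link n col"
  \<comment> \<open>The no-crossing hypothesis makes this a Sperner labelling.\<close>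
  define lab where "lab x j = (if \<exists>y. (x, y) \<in> ?R\<^sup>* \<and> y j = p then 1 else 0 :: nat)" for x j
  have "odd (card {s. ksimplex p n s \<and> (reduced n \<circ> lab) ` s = {..n}})"
    using assms(1) by (rule kuhn_combinatorial) (auto simp: lab_def dest: no_crossing)
  then have "{s. ksimplex p n s \<and> (reduced n \<circ> lab) ` s = {..n}} \<noteq> {}"
    by (rule odd_card_imp_not_empty)
  then obtain s where s: "ksimplex p n s" "(reduced n \<circ> lab) ` s = {..n}"
    by blast
  have "card s = Suc n"
    using s(1) by (rule ksimplex_card)
  then have inj_lab: "inj_on (reduced n \<circ> lab) s"
    using s(2) by (simp add: inj_on_iff_eq_card card_ge_0_finite)
  have same_lab: "lab a = lab b" if "a \<in> s" "b \<in> s" "col a = col b" for a b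
  proof -
    have "(a, b) \<in> ?R" "(b, a) \<in> ?R"
      using ksimplex_vertices_adjacent[OF s(1)] that unfolding colour_link_def by auto
    then have "(\<exists>y. (a, y) \<in> ?R\<^sup>* \<and> y j = p) \<longleftrightarrow> (\<exists>y. (b, y) \<in> ?R\<^sup>* \<and> y j = p)" for j
      using converse_rtrancl_into_rtrancl by metis
    then show ?thesis
      unfolding lab_def by auto
  qed
  have "inj_on col s"
  proof (rule inj_onI)
    fix a b assume ab: "a \<in> s" "b \<in> s" "col a = col b"
    then have "(reduced n \<circ> lab) a = (reduced n \<circ> lab) b"
      using same_lab[OF ab] by simp
    then show "a = b"
      using ab(1,2) by (rule inj_onD[OF inj_lab])
  qed
  with s(1) show ?thesis
    by blast
qed

text \<open>Kuhn's lemma works with grid points \<open>nat \<Rightarrow> nat\<close>, so the coordinates \<open>'n\<close> are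
enumerated by \<open>{..<CARD('n)}\<close>.\<close>

definition coord_index :: "'n::finite \<Rightarrow> nat" where
  "coord_index = (SOME f. bij_betw f UNIV {..<CARD('n)})"

lemma bij_coord_index: "bij_betw (coord_index :: 'n::finite \<Rightarrow> nat) UNIV {..<CARD('n)}"
  using ex_bij_betw_finite_nat[of "UNIV :: 'n set"] unfolding coord_index_def lessThan_atLeast0
  by (rule someI_ex) simp

definition grid_point :: "real \<Rightarrow> (nat \<Rightarrow> nat) \<Rightarrow> real^'n" where
  "grid_point h x = (\<chi> i. h * real (x (coord_index i)))"

lemma grid_point_nth: "grid_point h x $ i = h * real (x (coord_index i))"
  by (simp add: grid_point_def)

lemma grid_point_adjacent:
  assumes "0 \<le> h" "\<And>j. a j \<le> Suc (b j)" "\<And>j. b j \<le> Suc (a j)"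
  shows "grid_point h a \<in> maxball h (grid_point h b)"
  unfolding mem_maxball
proof
  fix i
  let ?j = "coord_index i"
  have "\<bar>real (a ?j) - real (b ?j)\<bar> \<le> 1"
    using assms(2,3)[of ?j] by linarith
  then have "h * \<bar>real (a ?j) - real (b ?j)\<bar> \<le> h"
    using assms(1) by (simp add: mult_left_le)
  then show "\<bar>grid_point h a $ i - grid_point h b $ i\<bar> \<le> h"
    using assms(1) by (simp add: grid_point_nth abs_mult right_diff_distrib[symmetric])
qed

lemma colour_chain_height_bound:
  fixes col :: "real^'n \<Rightarrow> (real^'n) set" and c h :: real and K :: nat
  assumes heavy: "\<And>q. c \<le> measure lebesgue (col q \<inter> maxball h q)"
    and fin: "col (grid_point h x) \<in> fmeasurable lebesgue"
    and small: "measure lebesgue (col (grid_point h x)) < K * c"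
    and chain: "(x, y) \<in> (colour_link CARD('n) (col \<circ> grid_point h))\<^sup>*"
    and j: "j < CARD('n)" "x j = 0" and "0 < h"
  shows "y j < 3 * K"
proof (rule ccontr)
  assume "\<not> y j < 3 * K"
  then have "3 * K \<le> y j"
    by simp
  let ?R = "colour_link CARD('n) (col \<circ> grid_point h)" and ?X = "col (grid_point h x)"
  obtain i :: 'n where i: "coord_index i = j"
    using bij_betw_imp_surj_on[OF bij_coord_index] j(1) by (metis imageE lessThan_iff)
  have "\<exists>z. (x, z) \<in> ?R\<^sup>* \<and> z j = 3 * k" if "k < K" for k
    using j that \<open>3 * K \<le> y j\<close> by (intro rtrancl_hits_intermediate_value[OF chain]) (auto simp: colour_link_def)
  then obtain z where z: "\<And>k. k < K \<Longrightarrow> (x, z k) \<in> ?R\<^sup>* \<and> z k j = 3 * k"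
    by metis
  \<comment> \<open>Heavy balls around chain points at heights \<open>0, 3, \<dots>, 3(K - 1)\<close>: disjoint, as \<open>3h > 2h\<close>.\<close>
  define A where "A k = ?X \<inter> maxball h (grid_point h (z k))" for k
  have "card {..<K} * c \<le> measure lebesgue ?X"
  proof (rule card_mult_le_measure_of_disjoint_subsets[OF fin])
    show "disjoint_family_on A {..<K}"
      unfolding disjoint_family_on_def
    proof (intro ballI impI)
      fix k k' assume "k \<in> {..<K}" "k' \<in> {..<K}" "k \<noteq> k'"
      then have "1 \<le> \<bar>real k - real k'\<bar>"
        by linarith
      then have "3 * h * 1 \<le> 3 * h * \<bar>real k - real k'\<bar>"
        using \<open>0 < h\<close> by (intro mult_left_mono) auto
      then have "h + h < 3 * h * \<bar>real k - real k'\<bar>"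
        using \<open>0 < h\<close> by linarith
      also have "\<dots> = \<bar>grid_point h (z k) $ i - grid_point h (z k') $ i\<bar>"
      proof -
        have "z k j = 3 * k" "z k' j = 3 * k'"
          using z \<open>k \<in> {..<K}\<close> \<open>k' \<in> {..<K}\<close> by auto
        then have "grid_point h (z k) $ i - grid_point h (z k') $ i = 3 * h * (real k - real k')"
          by (simp add: grid_point_nth i algebra_simps)
        then show ?thesis
          using \<open>0 < h\<close> by (simp add: abs_mult)
      qed
      finally have "maxball h (grid_point h (z k)) \<inter> maxball h (grid_point h (z k') :: real^'n) = {}"
        by (rule maxball_disjoint)
      then show "A k \<inter> A k' = {}"
        unfolding A_def by blast
    qed
  next
    fix k assume "k \<in> {..<K}"
    then have "(x, z k) \<in> ?R\<^sup>*"
      using z by blast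
    then have "(col \<circ> grid_point h) (z k) = (col \<circ> grid_point h) x"
      by (rule colour_link_rtrancl_colour)
    then show "A k \<in> sets lebesgue \<and> A k \<subseteq> ?X \<and> c \<le> measure lebesgue (A k)"
      using heavy[of "grid_point h (z k)"] fmeasurableD[OF fin] fmeasurableD[OF maxball_lmeasurable]
      unfolding A_def by auto
  qed simp
  with small show False
    by simp
qed

lemma ksimplex_rainbow_nbhd:
  fixes col :: "real^'n \<Rightarrow> (real^'n) set"
  assumes s: "ksimplex p n s" "inj_on (col \<circ> grid_point h) s" and "0 \<le> h"
    and col: "\<And>q. col q \<in> P" "\<And>q. col q \<inter> maxball h q \<noteq> {}"
  shows "\<exists>q. infinite (nbhd P (2 * h) q) \<or> Suc n \<le> card (nbhd P (2 * h) q)"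
proof -
  have "s \<noteq> {}"
    using ksimplex_card[OF s(1)] by auto
  then obtain a where "a \<in> s"
    by blast
  have sub: "(col \<circ> grid_point h) ` s \<subseteq> nbhd P (2 * h) (grid_point h a)"
  proof
    fix X assume "X \<in> (col \<circ> grid_point h) ` s"
    then obtain b where b: "b \<in> s" "X = col (grid_point h b)"
      by auto
    have "grid_point h b \<in> maxball h (grid_point h a)"
      using \<open>0 \<le> h\<close> ksimplex_vertices_adjacent[OF s(1) b(1) \<open>a \<in> s\<close>]
        ksimplex_vertices_adjacent[OF s(1) \<open>a \<in> s\<close> b(1)] by (rule grid_point_adjacent)
    then have "maxball h (grid_point h b) \<subseteq> maxball (2 * h) (grid_point h a)"
      unfolding mult_2 by (rule maxball_subset_maxball)
    then show "X \<in> nbhd P (2 * h) (grid_point h a)"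
      using col(1,2)[of "grid_point h b"] b(2) unfolding nbhd_def by blast
  qed
  have "card ((col \<circ> grid_point h) ` s) = Suc n"
    using card_image[OF s(2)] ksimplex_card[OF s(1)] by simp
  with card_mono[OF _ sub] show ?thesis
    by (metis not_le)
qed

theorem mainTheorem3:
  fixes P :: "(real^'n) set set" and M \<epsilon> :: real
  assumes "is_partition P"
    and "0 < M"
    and "\<forall>X\<in>P. X \<in> sets lebesgue \<and> emeasure lebesgue X < ennreal M"
    and "0 < \<epsilon>"
  shows "\<exists>p :: real^'n. infinite (nbhd P \<epsilon> p) \<or> CARD('n) + 1 \<le> card (nbhd P \<epsilon> p)"
proof (rule ccontr)
  assume contra: "\<not> ?thesis"
  define h where "h = \<epsilon> / 2"
  define c where "c = (2 * h) ^ CARD('n) / CARD('n)"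
  have "0 < h" "0 < c"
    using assms(4) by (simp_all add: h_def c_def)
  have meas: "\<forall>X\<in>P. X \<in> sets lebesgue"
    using assms(3) by blast
  have "finite (nbhd P \<epsilon> q)" "card (nbhd P \<epsilon> q) \<le> CARD('n)" for q
    using contra by (auto simp: not_less_eq_eq)
  then have small: "finite (nbhd P h q)" "card (nbhd P h q) \<le> CARD('n)" for q
    using finite_card_nbhd_mono[of h \<epsilon>] assms(4) le_trans unfolding h_def by fastforce+
  obtain col where col_P: "\<And>q. col q \<in> P" and col_heavy: "\<And>q. c \<le> measure lebesgue (col q \<inter> maxball h q)"
    unfolding c_def by (rule partition_heavy_colouring[OF assms(1) meas small]) (use \<open>0 < h\<close> in auto)
  have col_fin: "col q \<in> fmeasurable lebesgue" "measure lebesgue (col q) < M" for q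
    using assms(3) col_P[of q] by (auto intro: emeasure_less_ennrealD)
  obtain K :: nat where K: "M < K * c"
    using reals_Archimedean3[OF \<open>0 < c\<close>] by blast
  then have "0 < 3 * K"
    using assms(2) \<open>0 < c\<close> by (cases K) auto
  moreover have "y j \<noteq> 3 * K"
    if "(x, y) \<in> (colour_link CARD('n) (col \<circ> grid_point h))\<^sup>*" "j < CARD('n)" "x j = 0" for x y j
    using colour_chain_height_bound[OF col_heavy col_fin(1) less_trans[OF col_fin(2) K] that \<open>0 < h\<close>]
    by simp
  ultimately obtain s where "ksimplex (3 * K) CARD('n) s" "inj_on (col \<circ> grid_point h) s"
    using ksimplex_rainbow[of "3 * K" "CARD('n)" "col \<circ> grid_point h"] by blast
  moreover have "col q \<inter> maxball h q \<noteq> {}" for q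
    using col_heavy[of q] \<open>0 < c\<close> by (metis measure_empty not_le)
  ultimately have "\<exists>q. infinite (nbhd P (2 * h) q) \<or> Suc CARD('n) \<le> card (nbhd P (2 * h) q)"
    using \<open>0 < h\<close> col_P by (intro ksimplex_rainbow_nbhd) auto
  with contra show False
    by (simp add: h_def)
qed

end
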